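(* Let $\psi$ be admissible, let $Q=Q(\partial_\psi)$ be a $\partial_\psi$-delta operator with $\partial_\psi$-basic polynomial sequence $(p_n)_{n\ge0}$, and let $\hat x_{Q}$ be its dual operator. (i) For an arbitrary sequence $(q_n)_{n\ge0}$ of polynomials in one variable, $T=\sum_{n\ge0}q_n(\hat x_{Q})\,Q^n$ defines a linear operator $P\to P$ (the sum being finite on each polynomial). (ii) Conversely, for every linear operator $T:P\to P$ there exists a unique sequence $(q_n)_{n\ge0}$ of polynomials such that $T=\sum_{n\ge0}q_n(\hat x_{Q})\,Q^n$.
   Context: $\mathbf F$ is a field of characteristic zero, $P=\mathbf F[x]$, $\mathrm{End}(P)$ the algebra of linear operators on $P$. An admissible sequence is $\psi=(\psi_n)_{n\ge0}$ with $\psi_n\in\mathbf F$, $\psi_0=1$, $\psi_n\neq0$; $n_\psi=\psi_{n-1}/\psi_n$ ($n\ge1$), $0_\psi=0$, $n_\psi!=n_\psi(n-1)_\psi\cdots1_\psi$, $0_\psi!=1$. The $\psi$-derivative is $\partial_\psi x^n=n_\psi x^{n-1}$; $E^y(\partial_\psi)=\sum_{k\ge0}\frac{y^k}{k_\psi!}\partial_\psi^{\,k}$ for $y\in\mathbf F$; $\Sigma_\psi=\{T\in\mathrm{End}(P):[T,E^\alpha(\partial_\psi)]=0\ \forall\alpha\in\mathbf F\}$. A $\partial_\psi$-delta operator is $Q\in\Sigma_\psi$ with $Q(x)$ a nonzero constant; its $\partial_\psi$-basic polynomial sequence is $(p_n)$ with $\deg p_n=n$, $p_0=1$, $p_n(0)=0$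 ($n>0$), $Qp_n=n_\psi p_{n-1}$. The dual operator $\hat x_Q$ is the linear map on $P$ with $\hat x_Qp_n=\frac{n+1}{(n+1)_\psi}p_{n+1}$ ($n\ge0$). *)

theory Defs
  imports "HOL-Computational_Algebra.Polynomial"
begin

text \<open>P = F[x] is represented by the type 'a poly, with 'a :: field_char_0.\<close>

definition lin_op :: "('a::field poly \<Rightarrow> 'a poly) \<Rightarrow> bool" where
  "lin_op T \<longleftrightarrow> (\<forall>f g. T (f + g) = T f + T g) \<and> (\<forall>c f. T (smult c f) = smult c (T f))"

definition admissible :: "(nat \<Rightarrow> 'a::field) \<Rightarrow> bool" where
  "admissible psi \<longleftrightarrow> psi 0 = 1 \<and> (\<forall>n. psi n \<noteq> 0)"

definition npsi :: "(nat \<Rightarrow> 'a::field) \<Rightarrow> nat \<Rightarrow> 'a" where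
  "npsi psi n = (if n = 0 then 0 else psi (n - 1) / psi n)"

definition psi_fact :: "(nat \<Rightarrow> 'a::field) \<Rightarrow> nat \<Rightarrow> 'a" where
  "psi_fact psi n = (\<Prod>k=1..n. npsi psi k)"

definition psi_deriv :: "(nat \<Rightarrow> 'a::field) \<Rightarrow> 'a poly \<Rightarrow> 'a poly" where
  "psi_deriv psi p = (\<Sum>k\<le>degree p. monom (coeff p k * npsi psi k) (k - 1))"

text \<open>E^y(psi-derivative) = sum_k y^k / k_psi! (psi-derivative)^k; the sum is finite on each
  polynomial since (psi-derivative)^k p = 0 for k > degree p.\<close>
definition psi_exp :: "(nat \<Rightarrow> 'a::field) \<Rightarrow> 'a \<Rightarrow> 'a poly \<Rightarrow> 'a poly" where
  "psi_exp psi y p = (\<Sum>k\<le>degree p. smult (y ^ k / psi_fact psi k) ((psi_deriv psi ^^ k) p))"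

definition Sigma_psi :: "(nat \<Rightarrow> 'a::field) \<Rightarrow> ('a poly \<Rightarrow> 'a poly) set" where
  "Sigma_psi psi = {T. lin_op T \<and> (\<forall>\<alpha>. T \<circ> psi_exp psi \<alpha> = psi_exp psi \<alpha> \<circ> T)}"

definition psi_delta :: "(nat \<Rightarrow> 'a::field) \<Rightarrow> ('a poly \<Rightarrow> 'a poly) \<Rightarrow> bool" where
  "psi_delta psi Q \<longleftrightarrow> Q \<in> Sigma_psi psi \<and> degree (Q [:0, 1:]) = 0 \<and> Q [:0, 1:] \<noteq> 0"

definition psi_basic_seq ::
  "(nat \<Rightarrow> 'a::field) \<Rightarrow> ('a poly \<Rightarrow> 'a poly) \<Rightarrow> (nat \<Rightarrow> 'a poly) \<Rightarrow> bool" where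
  "psi_basic_seq psi Q p \<longleftrightarrow>
     (\<forall>n. degree (p n) = n) \<and> p 0 = 1 \<and> (\<forall>n>0. poly (p n) 0 = 0) \<and>
     (\<forall>n>0. Q (p n) = smult (npsi psi n) (p (n - 1)))"

definition dual_op ::
  "(nat \<Rightarrow> 'a::field_char_0) \<Rightarrow> (nat \<Rightarrow> 'a poly) \<Rightarrow> ('a poly \<Rightarrow> 'a poly) \<Rightarrow> bool" where
  "dual_op psi p X \<longleftrightarrow> lin_op X \<and>
     (\<forall>n. X (p n) = smult (of_nat (n + 1) / npsi psi (n + 1)) (p (n + 1)))"

definition op_poly :: "'a::field poly \<Rightarrow> ('a poly \<Rightarrow> 'a poly) \<Rightarrow> 'a poly \<Rightarrow> 'a poly" where
  "op_poly q X f = (\<Sum>i\<le>degree q. smult (coeff q i) ((X ^^ i) f))"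

definition series_term ::
  "(nat \<Rightarrow> 'a::field poly) \<Rightarrow> ('a poly \<Rightarrow> 'a poly) \<Rightarrow> ('a poly \<Rightarrow> 'a poly) \<Rightarrow> 'a poly \<Rightarrow> nat \<Rightarrow> 'a poly" where
  "series_term q X Q f n = op_poly (q n) X ((Q ^^ n) f)"

text \<open>sum_n q_n(X) Q^n, applied to f: the sum of the (finitely many, see the theorem) nonzero terms.\<close>
definition series_op ::
  "(nat \<Rightarrow> 'a::field poly) \<Rightarrow> ('a poly \<Rightarrow> 'a poly) \<Rightarrow> ('a poly \<Rightarrow> 'a poly) \<Rightarrow> 'a poly \<Rightarrow> 'a poly" where
  "series_op q X Q f = (\<Sum>n\<in>{n. series_term q X Q f n \<noteq> 0}. series_term q X Q f n)"

end

theory Submission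
  imports Defs
begin

(*
  The proof only uses the following "ladder" structure: the basic sequence (p n) is a
  graded basis of F[x] (degree p n = n), Q lowers it (Q p 0 = 0, Q p (n+1) = a_n p n) and
  the dual operator X raises it (X p n = b_n p (n+1)), with all a_n, b_n nonzero.

  (i) Q^n kills every polynomial of degree < n, so the series sum_n q_n(X) Q^n f has at most
      degree f + 1 nonzero terms and is linear in f; this holds for any linear Q with that
      property.
  (ii) Applied to p m, the series only involves q_0, ..., q_m, and its last term is
      q_m(X) Q^m p m = c * q_m(X) p 0 with c nonzero.  Since r |-> r(X) p 0 is a bijection
      F[x] -> F[x] (it maps x^i to a nonzero multiple of p i), the equations T p m = series(p m)
      can be solved uniquely for q_m by recursion on m; as linear maps agree when they agree
      on a basis, this gives existence and uniqueness of (q_n).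
  Finally, the hypotheses of the theorem provide the ladder structure; the only non-obvious
  point, Q 1 = 0, follows from Q commuting with the psi-translation E^1, which maps x to x + 1.
*)

lemma lin_op_add: "lin_op T \<Longrightarrow> T (f + g) = T f + T g"
  by (simp add: lin_op_def)

lemma lin_op_smult: "lin_op T \<Longrightarrow> T (smult c f) = smult c (T f)"
  by (simp add: lin_op_def)

lemma lin_op_zero: "lin_op T \<Longrightarrow> T 0 = 0"
  using lin_op_smult[of T 0 0] by simp

lemma lin_op_sum: "lin_op T \<Longrightarrow> T (\<Sum>x\<in>A. g x) = (\<Sum>x\<in>A. T (g x))"
  by (induction A rule: infinite_finite_induct) (simp_all add: lin_op_zero lin_op_add)

lemma lin_op_comp: "lin_op S \<Longrightarrow> lin_op T \<Longrightarrow> lin_op (\<lambda>f. S (T f))"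
  by (simp add: lin_op_def)

lemma lin_op_funpow: "lin_op T \<Longrightarrow> lin_op (T ^^ n)"
  by (induction n) (simp_all add: lin_op_def)

lemma lin_op_smult_op: "lin_op (smult c)"
  by (simp add: lin_op_def smult_add_right mult.commute)

lemma op_poly_upto:
  "degree r \<le> N \<Longrightarrow> op_poly r X f = (\<Sum>i\<le>N. smult (coeff r i) ((X ^^ i) f))"
  unfolding op_poly_def by (rule sum.mono_neutral_left) (auto simp: coeff_eq_0)

lemma lin_op_op_poly:
  assumes "lin_op X"
  shows "lin_op (op_poly r X)"
proof -
  have lin_pow: "lin_op (X ^^ i)" for i by (rule lin_op_funpow[OF assms])
  show ?thesis
    unfolding lin_op_def op_poly_def
    by (simp add: lin_op_add[OF lin_pow] lin_op_smult[OF lin_pow] lin_op_sum[OF lin_op_smult_op]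
        smult_add_right sum.distrib mult.commute)
qed

lemma op_poly_diff: "op_poly (r - s) X f = op_poly r X f - op_poly s X f"
proof -
  define N where "N = max (degree r) (degree s)"
  have "degree (r - s) \<le> N" unfolding N_def by (rule degree_diff_le) auto
  then show ?thesis
    by (simp add: op_poly_upto[of _ N] N_def smult_diff_left sum_subtractf)
qed

section \<open>Well-definedness and linearity of the operator series\<close>

lemma series_term_vanishes:
  assumes "lin_op X" "(Q ^^ n) f = 0"
  shows "series_term q X Q f n = 0"
  using assms by (simp add: series_term_def lin_op_zero[OF lin_op_op_poly])

lemma series_support_finite:
  assumes "lin_op X" and kill: "\<And>f n. degree f < n \<Longrightarrow> (Q ^^ n) f = 0"
  shows "finite {n. series_term q X Q f n \<noteq> 0}"
proof (rule finite_subset)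
  show "{n. series_term q X Q f n \<noteq> 0} \<subseteq> {..degree f}"
    using series_term_vanishes[OF assms(1) kill] by (auto simp: not_le[symmetric])
qed simp

lemma series_op_upto:
  assumes "lin_op X" and kill: "\<And>f n. degree f < n \<Longrightarrow> (Q ^^ n) f = 0"
    and "degree f \<le> N"
  shows "series_op q X Q f = (\<Sum>n\<le>N. series_term q X Q f n)"
  unfolding series_op_def
proof (rule sum.mono_neutral_left)
  show "{n. series_term q X Q f n \<noteq> 0} \<subseteq> {..N}"
    using series_term_vanishes[OF assms(1) kill] assms(3) by (force simp: not_le[symmetric])
qed auto

lemma lin_op_series_op:
  assumes X: "lin_op X" and Q: "lin_op Q" and kill: "\<And>f n. degree f < n \<Longrightarrow> (Q ^^ n) f = 0"
  shows "lin_op (series_op q X Q)"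
proof -
  have term_lin: "lin_op (\<lambda>f. series_term q X Q f n)" for n
    unfolding series_term_def by (rule lin_op_comp[OF lin_op_op_poly[OF X] lin_op_funpow[OF Q]])
  note upto = series_op_upto[OF X kill]
  have "series_op q X Q (f + g) = series_op q X Q f + series_op q X Q g" for f g
  proof -
    define N where "N = max (degree f) (degree g)"
    have "degree (f + g) \<le> N" unfolding N_def by (rule degree_add_le) auto
    then show ?thesis
      by (simp add: upto[of _ N] N_def lin_op_add[OF term_lin] sum.distrib)
  qed
  moreover have "series_op q X Q (smult c f) = smult c (series_op q X Q f)" for c f
    using degree_smult_le[of c f]
    by (simp add: upto[of _ "degree f"] lin_op_smult[OF term_lin] lin_op_sum[OF lin_op_smult_op])
  ultimately show ?thesis unfolding lin_op_def by blast
qed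

section \<open>Ladder operators on a graded basis\<close>

locale ladder =
  fixes Q X :: "'a::field poly \<Rightarrow> 'a poly" and p :: "nat \<Rightarrow> 'a poly" and a b :: "nat \<Rightarrow> 'a"
  assumes lin_Q: "lin_op Q" and lin_X: "lin_op X"
    and degree_p: "\<And>n. degree (p n) = n" and p0_nonzero: "p 0 \<noteq> 0"
    and lower_p0: "Q (p 0) = 0" and lower_pSuc: "\<And>n. Q (p (Suc n)) = smult (a n) (p n)"
    and a_nonzero: "\<And>n. a n \<noteq> 0"
    and raise_p: "\<And>n. X (p n) = smult (b n) (p (Suc n))" and b_nonzero: "\<And>n. b n \<noteq> 0"
begin

lemma p_nonzero: "p n \<noteq> 0"
  using p0_nonzero degree_p[of n] by (cases n) auto

lemma lead_coeff_p_nonzero: "coeff (p n) n \<noteq> 0"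
  using p_nonzero[of n] degree_p[of n] by (metis leading_coeff_0_iff)

text \<open>Every polynomial of degree at most \<open>N\<close> is a combination of \<open>p 0, \<dots>, p N\<close>:
  subtract the right multiple of \<open>p N\<close> to lower the degree.\<close>
lemma basis_span: "degree f \<le> N \<Longrightarrow> \<exists>c. f = (\<Sum>i\<le>N. smult (c i) (p i))"
proof (induction N arbitrary: f)
  case 0
  have f: "f = [:coeff f 0:]" and p0: "p 0 = [:coeff (p 0) 0:]"
    using 0 degree_0_id[of f] degree_0_id[of "p 0"] degree_p[of 0] by simp_all
  have "f = smult (coeff f 0 / coeff (p 0) 0) (p 0)"
    using lead_coeff_p_nonzero[of 0] by (subst f, subst p0) simp
  then show ?case by (intro exI[of _ "\<lambda>_. coeff f 0 / coeff (p 0) 0"]) simp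
next
  case (Suc N)
  define c where "c = coeff f (Suc N) / coeff (p (Suc N)) (Suc N)"
  define g where "g = f - smult c (p (Suc N))"
  have "degree g \<le> Suc N"
    unfolding g_def using Suc.prems degree_smult_le[of c "p (Suc N)"] degree_p[of "Suc N"]
    by (intro degree_diff_le) auto
  moreover have "coeff g (Suc N) = 0"
    unfolding g_def c_def using lead_coeff_p_nonzero[of "Suc N"] by simp
  ultimately have "coeff g i = 0" if "N < i" for i
    using that by (cases "i = Suc N") (auto intro: coeff_eq_0)
  then have "degree g \<le> N" by (simp add: degree_le)
  then obtain d where d: "g = (\<Sum>i\<le>N. smult (d i) (p i))" using Suc.IH by blast
  have "f = (\<Sum>i\<le>N. smult (d i) (p i)) + smult c (p (Suc N))"
    using d unfolding g_def by (simp add: algebra_simps)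
  also have "\<dots> = (\<Sum>i\<le>Suc N. smult ((d(Suc N := c)) i) (p i))"
    by (simp add: sum.atMost_Suc)
  finally show ?case by blast
qed

text \<open>The \<open>p i\<close> are linearly independent: compare coefficients from the top degree down.\<close>
lemma basis_independent: "(\<Sum>i\<le>N. smult (c i) (p i)) = 0 \<Longrightarrow> i \<le> N \<Longrightarrow> c i = 0"
proof (induction N arbitrary: i)
  case 0
  then show ?case using p_nonzero[of 0] by simp
next
  case (Suc N)
  have "0 = coeff (\<Sum>i\<le>Suc N. smult (c i) (p i)) (Suc N)"
    by (simp only: Suc.prems(1) coeff_0)
  also have "\<dots> = c (Suc N) * coeff (p (Suc N)) (Suc N)"
    by (simp add: coeff_sum sum.atMost_Suc coeff_eq_0 degree_p)
  finally have top: "c (Suc N) = 0"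
    using lead_coeff_p_nonzero[of "Suc N"] by simp
  then have "(\<Sum>i\<le>N. smult (c i) (p i)) = 0" using Suc.prems(1) by (simp add: sum.atMost_Suc)
  then show ?case using Suc.IH Suc.prems(2) top by (cases "i = Suc N") auto
qed

lemma lin_op_eq_on_basis:
  assumes "lin_op T" "lin_op S" "\<And>m. T (p m) = S (p m)"
  shows "T = S"
proof
  fix f
  obtain c where c: "f = (\<Sum>i\<le>degree f. smult (c i) (p i))" using basis_span by blast
  show "T f = S f"
    by (subst (1 2) c) (simp add: lin_op_sum[OF assms(1)] lin_op_smult[OF assms(1)]
        lin_op_sum[OF assms(2)] lin_op_smult[OF assms(2)] assms(3))
qed

lemma lower_pow: "(Q ^^ n) (p (n + k)) = smult (\<Prod>i\<in>{k..<n + k}. a i) (p k)"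
proof (induction n)
  case (Suc n)
  have "(Q ^^ Suc n) (p (Suc n + k)) = (Q ^^ n) (smult (a (n + k)) (p (n + k)))"
    by (simp only: funpow_Suc_right o_apply add_Suc lower_pSuc)
  also have "\<dots> = smult (\<Prod>i\<in>{k..<Suc n + k}. a i) (p k)"
    by (simp add: lin_op_smult[OF lin_op_funpow[OF lin_Q]] Suc.IH prod.atLeastLessThan_Suc
        mult.commute)
  finally show ?case .
qed simp

lemma lower_pow_diag: "(Q ^^ m) (p m) = smult (\<Prod>i<m. a i) (p 0)"
  using lower_pow[of m 0] by (simp add: atLeast0LessThan)

lemma lower_pow_below: "m < n \<Longrightarrow> (Q ^^ n) (p m) = 0"
proof (induction n)
  case (Suc n)
  then consider "m < n" | "m = n" by linarith
  then show ?case
  proof cases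
    case 1
    then show ?thesis by (simp add: Suc.IH lin_op_zero[OF lin_Q])
  next
    case 2
    then show ?thesis by (simp add: lower_pow_diag lin_op_smult[OF lin_Q] lower_p0)
  qed
qed simp

lemma lower_pow_degree: "degree f < n \<Longrightarrow> (Q ^^ n) f = 0"
proof -
  assume deg: "degree f < n"
  have lin_Qn: "lin_op (Q ^^ n)" by (rule lin_op_funpow[OF lin_Q])
  obtain c where c: "f = (\<Sum>i\<le>degree f. smult (c i) (p i))" using basis_span by blast
  have "(Q ^^ n) f = (Q ^^ n) (\<Sum>i\<le>degree f. smult (c i) (p i))"
    using c by (rule arg_cong)
  also have "\<dots> = (\<Sum>i\<le>degree f. smult (c i) ((Q ^^ n) (p i)))"
    by (simp only: lin_op_sum[OF lin_Qn] lin_op_smult[OF lin_Qn])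
  also have "\<dots> = 0"
    using deg by (intro sum.neutral) (simp add: lower_pow_below)
  finally show ?thesis .
qed

lemma raise_pow: "(X ^^ i) (p 0) = smult (\<Prod>k<i. b k) (p i)"
  by (induction i) (simp_all add: lin_op_smult[OF lin_X] raise_p mult.commute)

text \<open>Consequently \<open>r \<mapsto> r(X) p 0\<close> maps \<open>x\<^sup>i\<close> to a nonzero multiple of \<open>p i\<close>, so it is a
  bijection of \<open>F[x]\<close>.\<close>
lemma op_poly_p0: "op_poly r X (p 0) = (\<Sum>i\<le>degree r. smult (coeff r i * (\<Prod>k<i. b k)) (p i))"
  unfolding op_poly_def by (simp add: raise_pow)

lemma bij_op_poly_p0: "bij (\<lambda>r. op_poly r X (p 0))"
proof (rule bijI)
  have kernel: "r = 0" if "op_poly r X (p 0) = 0" for r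
  proof -
    have "coeff r i * (\<Prod>k<i. b k) = 0" if "i \<le> degree r" for i
      using basis_independent[of "\<lambda>i. coeff r i * (\<Prod>k<i. b k)"] \<open>op_poly r X (p 0) = 0\<close> that
      by (simp add: op_poly_p0)
    then have "coeff r i = 0" for i
      using b_nonzero by (cases "i \<le> degree r") (auto simp: coeff_eq_0)
    then show "r = 0" by (simp add: poly_eq_iff)
  qed
  show "inj (\<lambda>r. op_poly r X (p 0))"
  proof (rule injI)
    fix r s
    assume "op_poly r X (p 0) = op_poly s X (p 0)"
    then have "op_poly (r - s) X (p 0) = 0" by (simp add: op_poly_diff)
    then have "r - s = 0" by (rule kernel)
    then show "r = s" by simp
  qed
  have "\<exists>r. g = op_poly r X (p 0)" for g
  proof -
    obtain c where c: "g = (\<Sum>i\<le>degree g. smult (c i) (p i))" using basis_span by blast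
    define r where "r = (\<Sum>i\<le>degree g. monom (c i / (\<Prod>k<i. b k)) i)"
    have coeff_r: "coeff r i = (if i \<le> degree g then c i / (\<Prod>k<i. b k) else 0)" for i
      unfolding r_def by (simp add: coeff_sum coeff_monom)
    have "degree r \<le> degree g" by (rule degree_le) (simp add: coeff_r)
    then have "op_poly r X (p 0) = (\<Sum>i\<le>degree g. smult (coeff r i) ((X ^^ i) (p 0)))"
      by (rule op_poly_upto)
    also have "\<dots> = (\<Sum>i\<le>degree g. smult (c i) (p i))"
      using b_nonzero by (intro sum.cong) (simp_all add: coeff_r raise_pow)
    also have "\<dots> = g" using c by simp
    finally show ?thesis by (intro exI[of _ r]) simp
  qed
  then show "surj (\<lambda>r. op_poly r X (p 0))" by (simp add: surj_def)
qed

section \<open>Expansion of an operator in powers of \<open>Q\<close>\<close>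

text \<open>The top term of the series applied to \<open>p m\<close>, as a function of \<open>q m\<close>.\<close>
definition top_term :: "nat \<Rightarrow> 'a poly \<Rightarrow> 'a poly" where
  "top_term m r = op_poly r X ((Q ^^ m) (p m))"

lemma bij_top_term: "bij (top_term m)"
proof -
  define c where "c = (\<Prod>i<m. a i)"
  have "c \<noteq> 0" unfolding c_def using a_nonzero by simp
  then have bij_c: "bij (smult c :: 'a poly \<Rightarrow> _)"
    by (intro o_bij[where g = "smult (inverse c)"]) (auto simp: fun_eq_iff)
  have "top_term m = smult c \<circ> (\<lambda>r. op_poly r X (p 0))"
    by (auto simp: top_term_def lower_pow_diag lin_op_smult[OF lin_op_op_poly[OF lin_X]] c_def)
  then show ?thesis using bij_comp[OF bij_op_poly_p0 bij_c] by simp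
qed

lemma series_op_p:
  "series_op q X Q (p m) = (\<Sum>n<m. series_term q X Q (p m) n) + top_term m (q m)"
  using series_op_upto[OF lin_X lower_pow_degree, of "p m" m q]
  by (simp add: degree_p lessThan_Suc_atMost[symmetric] series_term_def top_term_def)

text \<open>Uniqueness: by strong induction on \<open>m\<close>, equality of the series on \<open>p m\<close> forces
  equality of the top terms, hence of \<open>q m\<close>.\<close>
lemma series_op_unique: "series_op q X Q = series_op q' X Q \<Longrightarrow> q = q'"
proof
  assume eq: "series_op q X Q = series_op q' X Q"
  fix m
  show "q m = q' m"
  proof (induction m rule: less_induct)
    case (less m)
    have "(\<Sum>n<m. series_term q X Q (p m) n) = (\<Sum>n<m. series_term q' X Q (p m) n)"
      by (rule sum.cong) (simp_all add: series_term_def less)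
    then have "top_term m (q m) = top_term m (q' m)"
      using eq series_op_p[of q m] series_op_p[of q' m] by simp
    then show ?case using bij_top_term[of m] by (simp add: bij_def inj_eq)
  qed
qed

text \<open>Given \<open>T\<close>, solve \<open>T (p m) = series_op q X Q (p m)\<close> for \<open>q m\<close>, by recursion on \<open>m\<close>.\<close>
function coefficient :: "('a poly \<Rightarrow> 'a poly) \<Rightarrow> nat \<Rightarrow> 'a poly" where
  "coefficient T m = inv (top_term m)
     (T (p m) - (\<Sum>n<m. op_poly (coefficient T n) X ((Q ^^ n) (p m))))"
  by auto
termination by (relation "measure snd") auto

declare coefficient.simps [simp del]

lemma series_op_exists:
  assumes "lin_op T"
  shows "T = series_op (coefficient T) X Q"
proof (rule lin_op_eq_on_basis[OF assms lin_op_series_op[OF lin_X lin_Q lower_pow_degree]])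
  fix m
  have "top_term m (coefficient T m) = T (p m) - (\<Sum>n<m. series_term (coefficient T) X Q (p m) n)"
    using bij_top_term[of m]
    by (subst coefficient.simps) (simp add: bij_is_surj surj_f_inv_f series_term_def)
  then show "T (p m) = series_op (coefficient T) X Q (p m)"
    by (simp add: series_op_p)
qed

end

section \<open>The delta operator annihilates constants\<close>

lemma psi_exp_const: "degree c = 0 \<Longrightarrow> psi_exp psi \<alpha> c = c"
  by (simp add: psi_exp_def psi_fact_def)

lemma psi_exp_one_x:
  assumes "admissible psi"
  shows "psi_exp psi 1 [:0, 1:] = [:0, 1:] + 1"
proof -
  have "npsi psi 1 \<noteq> 0" using assms by (simp add: admissible_def npsi_def)
  then show ?thesis
    by (simp add: psi_exp_def psi_fact_def psi_deriv_def monom_0 one_pCons)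
qed

text \<open>Since \<open>Q x\<close> is constant, \<open>Q (x + 1) = E\<^sup>1 (Q x) = Q x\<close>, hence \<open>Q 1 = 0\<close>.\<close>
lemma psi_delta_one:
  assumes "admissible psi" "psi_delta psi Q"
  shows "Q 1 = 0"
proof -
  have lin: "lin_op Q" and comm: "Q \<circ> psi_exp psi 1 = psi_exp psi 1 \<circ> Q"
    and Qx_const: "degree (Q [:0, 1:]) = 0"
    using assms(2) by (simp_all add: psi_delta_def Sigma_psi_def)
  have "Q [:0, 1:] + Q 1 = Q ([:0, 1:] + 1)" by (rule lin_op_add[OF lin, symmetric])
  also have "\<dots> = Q (psi_exp psi 1 [:0, 1:])" by (simp add: psi_exp_one_x[OF assms(1)])
  also have "\<dots> = psi_exp psi 1 (Q [:0, 1:])" using comm by (simp add: fun_eq_iff)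
  also have "\<dots> = Q [:0, 1:]" by (rule psi_exp_const[OF Qx_const])
  finally show ?thesis by simp
qed

theorem proposition3p3:
  fixes psi :: "nat \<Rightarrow> 'a::field_char_0"
    and Q X :: "'a poly \<Rightarrow> 'a poly"
    and p :: "nat \<Rightarrow> 'a poly"
  assumes "admissible psi"
    and "psi_delta psi Q"
    and "psi_basic_seq psi Q p"
    and "dual_op psi p X"
  shows "(\<forall>q :: nat \<Rightarrow> 'a poly.
            (\<forall>f. finite {n. series_term q X Q f n \<noteq> 0}) \<and> lin_op (series_op q X Q))
       \<and> (\<forall>T. lin_op T \<longrightarrow> (\<exists>!q :: nat \<Rightarrow> 'a poly. T = series_op q X Q))"
proof -
  have npsi_nonzero: "npsi psi (Suc n) \<noteq> 0" for n
    using assms(1) by (simp add: admissible_def npsi_def)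
  have raise_nonzero: "of_nat (Suc n) / npsi psi (Suc n) \<noteq> (0::'a)" for n
    using npsi_nonzero[of n] of_nat_neq_0[of n, where ?'a = 'a] by (simp del: of_nat_Suc)
  have Q_lin: "lin_op Q" using assms(2) by (simp add: psi_delta_def Sigma_psi_def)
  have basic: "\<And>n. degree (p n) = n" "p 0 = 1"
    "\<And>n. Q (p (Suc n)) = smult (npsi psi (Suc n)) (p n)"
    using assms(3) by (simp_all add: psi_basic_seq_def)
  have dual: "lin_op X" "\<And>n. X (p n) = smult (of_nat (Suc n) / npsi psi (Suc n)) (p (Suc n))"
    using assms(4) by (simp_all add: dual_op_def)
  interpret ladder Q X p "\<lambda>n. npsi psi (Suc n)" "\<lambda>n. of_nat (Suc n) / npsi psi (Suc n)"
    by unfold_locales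
      (simp_all del: of_nat_Suc
        add: Q_lin basic dual npsi_nonzero raise_nonzero psi_delta_one[OF assms(1,2)])
  show ?thesis
    using series_support_finite[OF lin_X lower_pow_degree]
      lin_op_series_op[OF lin_X lin_Q lower_pow_degree] series_op_exists series_op_unique
    by blast
qed

end
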